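(* Let $\alpha=(i_1^{\alpha_1},i_2^{\alpha_2},\ldots,i_m^{\alpha_m})$ be a partition of $n$ (the $i_j$ distinct part sizes, $\alpha_j$ their multiplicities). Then $$\mathbf{K}_{\alpha}=\mathbf{C}_{i_1}(X^{\alpha_1})\cdot\mathbf{C}_{i_2}(X^{\alpha_2})\cdots\mathbf{C}_{i_m}(X^{\alpha_m}),$$ where $\mathbf{C}_{i}(X^{a})$ denotes the composition $\mathbf{C}_{(i)}\circ X^{a}$.
   Context: Species are functors from finite sets with bijections to finite sets; equality means natural isomorphism. For $H\le S_n$, $X^n/H$ is the species with $(X^n/H)[U]=\{\lambda H:\lambda:[n]\to U\text{ bijection}\}$ ($\lambda H=\{\lambda\circ f:f\in H\}$), transport $(X^n/H)[\tau](\lambda H)=(\tau\lambda)H$. For a partition $\beta$ of $N$, $\sigma_\beta$ is the standard permutation filling cycles of lengths $\beta_1,\beta_2,\ldots$ with $1,\ldots,N$ in increasing order, and $\mathbf{C}_\beta:=X^N/\langle\sigma_\beta\rangle$. For $\alpha=(i_1^{\alpha_1},\ldots,i_m^{\alpha_m})$, $\mathbf{K}_\alpha$ is defined as the species product $\mathbf{C}_{i_m^{\alpha_m}}\cdot\mathbf{C}_{i_{m-1}^{\alpha_{m-1}}}\cdots\mathbf{C}_{i_1^{\alpha_1}}$, equivalently $X^n/G_\alpha$ with $G_\alpha$ the direct product of the cyclic groups generated by the standard permutations of shapes $i_j^{\alpha_j}$ acting on consecutive disjoint blocks of $[n]$. The product of species is $(F\cdot G)[U]=\bigsqcup_{U=U_1\sqcup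 U_2}F[U_1]\times G[U_2]$. $X^a$ is the species of lists of length $a$, and $(F\circ G)[U]=\bigsqcup_\pi F[\pi]\times\prod_{B\in\pi}G[B]$ over set partitions $\pi$ of $U$. *)

theory Defs
  imports Main "HOL-Library.Disjoint_Sets" "HOL-Library.FuncSet"
begin

text \<open>A species with labels of type 'a and structures of type 's:
  struct U is the set of F-structures on the finite label set U,
  transp tau s is the transport of s along a bijection tau : U -> V.\<close>
record ('a, 's) species =
  struct :: "'a set \<Rightarrow> 's set"
  transp :: "('a \<Rightarrow> 'a) \<Rightarrow> 's \<Rightarrow> 's"

text \<open>Equality of species = natural isomorphism.\<close>
definition species_iso :: "('a, 's) species \<Rightarrow> ('a, 't) species \<Rightarrow> bool" where
  "species_iso F G \<longleftrightarrow>
     (\<exists>\<phi> :: 'a set \<Rightarrow> 's \<Rightarrow> 't.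
        (\<forall>U. finite U \<longrightarrow> bij_betw (\<phi> U) (struct F U) (struct G U)) \<and>
        (\<forall>U V \<tau> s. finite U \<longrightarrow> bij_betw \<tau> U V \<longrightarrow> s \<in> struct F U \<longrightarrow>
            \<phi> V (transp F \<tau> s) = transp G \<tau> (\<phi> U s)))"

text \<open>A bijection lambda : [n] -> U is a distinct list of length n with set U
  (0-based positions). For a set H of permutations of {..<n}, lambda H is the coset.\<close>
definition coset_list :: "nat \<Rightarrow> (nat \<Rightarrow> nat) set \<Rightarrow> 'a list \<Rightarrow> 'a list set" where
  "coset_list n H xs = {map (\<lambda>i. xs ! f i) [0..<n] | f. f \<in> H}"

definition quot_sp :: "nat \<Rightarrow> (nat \<Rightarrow> nat) set \<Rightarrow> ('a, 'a list set) species" where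
  "quot_sp n H = \<lparr> struct = (\<lambda>U. {coset_list n H xs | xs. distinct xs \<and> length xs = n \<and> set xs = U}),
                  transp = (\<lambda>\<tau> s. map \<tau> ` s) \<rparr>"

definition Xpow :: "nat \<Rightarrow> ('a, 'a list) species" where
  "Xpow a = \<lparr> struct = (\<lambda>U. {xs. distinct xs \<and> length xs = a \<and> set xs = U}),
              transp = (\<lambda>\<tau> xs. map \<tau> xs) \<rparr>"

text \<open>Standard permutation of shape beta (0-based): cycles of lengths beta_1, beta_2, ...
  filled with consecutive numbers in increasing order; identity outside {..<sum beta}.\<close>
fun std_perm :: "nat list \<Rightarrow> nat \<Rightarrow> nat" where
  "std_perm [] j = j"
| "std_perm (b # bs) j =
     (if j < b then (if Suc j = b then 0 else Suc j) else b + std_perm bs (j - b))"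

definition cyc_group :: "(nat \<Rightarrow> nat) \<Rightarrow> (nat \<Rightarrow> nat) set" where
  "cyc_group \<sigma> = range (\<lambda>k. \<sigma> ^^ k)"

definition C_sp :: "nat list \<Rightarrow> ('a, 'a list set) species" where
  "C_sp \<beta> = quot_sp (sum_list \<beta>) (cyc_group (std_perm \<beta>))"

definition prod_sp :: "('a, 's) species list \<Rightarrow> ('a, ('a set \<times> 's) list) species" where
  "prod_sp Fs = \<lparr> struct = (\<lambda>U. {ps. length ps = length Fs \<and>
        (\<forall>j<length Fs. snd (ps ! j) \<in> struct (Fs ! j) (fst (ps ! j))) \<and>
        disjoint_family_on (\<lambda>j. fst (ps ! j)) {..<length Fs} \<and>
        (\<Union>j<length Fs. fst (ps ! j)) = U}),
     transp = (\<lambda>\<tau> ps. map (\<lambda>j. (\<tau> ` fst (ps ! j), transp (Fs ! j) \<tau> (snd (ps ! j)))) [0..<length ps]) \<rparr>"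

definition comp_sp :: "('a set, 's) species \<Rightarrow> ('a, 't) species
    \<Rightarrow> ('a, 'a set set \<times> 's \<times> ('a set \<Rightarrow> 't)) species" where
  "comp_sp F G = \<lparr> struct = (\<lambda>U. {(\<pi>, f, g) | \<pi> f g. partition_on U \<pi> \<and> f \<in> struct F \<pi> \<and>
                                  g \<in> (\<Pi>\<^sub>E B\<in>\<pi>. struct G B)}),
     transp = (\<lambda>\<tau> (\<pi>, f, g). ((`) \<tau> ` \<pi>, transp F ((`) \<tau>) f,
                 (\<lambda>B'\<in>(`) \<tau> ` \<pi>. transp G \<tau> (g (the_inv_into \<pi> ((`) \<tau>) B'))))) \<rparr>"

text \<open>A partition alpha = (i_1^alpha_1, ..., i_m^alpha_m) is given as the list of pairs
  (i_j, alpha_j). K_alpha = C_{i_m^alpha_m} \<cdot> ... \<cdot> C_{i_1^alpha_1}.\<close>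
definition K_sp :: "(nat \<times> nat) list \<Rightarrow> ('a, ('a set \<times> 'a list set) list) species" where
  "K_sp ps = prod_sp (rev (map (\<lambda>(i, a). C_sp (replicate a i)) ps))"

end

theory Submission
  imports Defs
begin

text \<open>
  Read a list of length \<open>a * i\<close> as an \<open>a \<times> i\<close> matrix stored row by row. The standard
  permutation of shape \<open>(i\<^sup>a)\<close> rotates every row cyclically, so the orbit of a list under the
  cyclic group it generates is determined exactly by the \<open>i\<close> columns of the matrix up to a
  simultaneous cyclic rotation. The columns are \<open>X\<^sup>a\<close>-structures on the blocks of a partition
  into \<open>i\<close> blocks, and their cyclic order is a \<open>C\<^sub>i\<close>-structure on the set of blocks; this
  identifies \<open>C\<^bsub>(i\<^sup>a)\<^esub>\<close> naturally with \<open>C\<^sub>i(X\<^sup>a)\<close>. The theorem follows because the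
  product of species is compatible with isomorphism factorwise and, up to isomorphism, does not
  depend on the order of the factors.
\<close>

section \<open>Natural isomorphisms\<close>

definition natural_iso :: "('a set \<Rightarrow> 's \<Rightarrow> 't) \<Rightarrow> ('a, 's) species \<Rightarrow> ('a, 't) species \<Rightarrow> bool" where
  "natural_iso \<phi> F G \<longleftrightarrow>
     (\<forall>U. finite U \<longrightarrow> bij_betw (\<phi> U) (struct F U) (struct G U)) \<and>
     (\<forall>U V \<tau> s. finite U \<longrightarrow> bij_betw \<tau> U V \<longrightarrow> s \<in> struct F U \<longrightarrow>
        \<phi> V (transp F \<tau> s) = transp G \<tau> (\<phi> U s))"

lemma species_iso_iff_natural_iso: "species_iso F G \<longleftrightarrow> (\<exists>\<phi>. natural_iso \<phi> F G)"
  by (simp add: species_iso_def natural_iso_def)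

lemma natural_isoI:
  assumes "\<And>U. finite U \<Longrightarrow> bij_betw (\<phi> U) (struct F U) (struct G U)"
    and "\<And>U V \<tau> s. finite U \<Longrightarrow> bij_betw \<tau> U V \<Longrightarrow> s \<in> struct F U \<Longrightarrow>
           \<phi> V (transp F \<tau> s) = transp G \<tau> (\<phi> U s)"
  shows "natural_iso \<phi> F G"
  using assms by (simp add: natural_iso_def)

lemma natural_iso_bij_betw: "natural_iso \<phi> F G \<Longrightarrow> finite U \<Longrightarrow> bij_betw (\<phi> U) (struct F U) (struct G U)"
  by (simp add: natural_iso_def)

lemma natural_iso_transp:
  "natural_iso \<phi> F G \<Longrightarrow> finite U \<Longrightarrow> bij_betw \<tau> U V \<Longrightarrow> s \<in> struct F U \<Longrightarrow>
     \<phi> V (transp F \<tau> s) = transp G \<tau> (\<phi> U s)"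
  by (simp add: natural_iso_def)

lemma natural_iso_comp:
  assumes \<phi>: "natural_iso \<phi> F G" and \<chi>: "natural_iso \<chi> G H"
  shows "natural_iso (\<lambda>U. \<chi> U \<circ> \<phi> U) F H"
proof (rule natural_isoI)
  fix U :: "'a set" assume U: "finite U"
  show "bij_betw (\<chi> U \<circ> \<phi> U) (struct F U) (struct H U)"
    by (rule bij_betw_trans[OF natural_iso_bij_betw[OF \<phi> U] natural_iso_bij_betw[OF \<chi> U]])
next
  fix U V :: "'a set" and \<tau> s assume U: "finite U" and \<tau>: "bij_betw \<tau> U V" and s: "s \<in> struct F U"
  have "\<phi> U s \<in> struct G U"
    using natural_iso_bij_betw[OF \<phi> U] s by (rule bij_betw_apply)
  then show "(\<chi> V \<circ> \<phi> V) (transp F \<tau> s) = transp H \<tau> ((\<chi> U \<circ> \<phi> U) s)"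
    using natural_iso_transp[OF \<phi> U \<tau> s] natural_iso_transp[OF \<chi> U \<tau>] by simp
qed

lemma species_iso_trans: "species_iso F G \<Longrightarrow> species_iso G H \<Longrightarrow> species_iso F H"
  unfolding species_iso_iff_natural_iso by (blast intro: natural_iso_comp)

section \<open>Products of species\<close>

text \<open>Unlike the blocks of a partition, the blocks of a decomposition may be empty.\<close>

definition is_decomposition :: "'a set \<Rightarrow> 'a set list \<Rightarrow> bool" where
  "is_decomposition U Bs \<longleftrightarrow> disjoint_family_on (nth Bs) {..<length Bs} \<and> \<Union> (set Bs) = U"

lemma in_struct_prod_sp:
  "ps \<in> struct (prod_sp Fs) U \<longleftrightarrow>
     list_all2 (\<lambda>p F. snd p \<in> struct F (fst p)) ps Fs \<and> is_decomposition U (map fst ps)"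
proof -
  have "map fst ps = map (\<lambda>j. fst (ps ! j)) [0..<length ps]"
    by (rule nth_equalityI) simp_all
  then have "(\<Union>j<length ps. fst (ps ! j)) = \<Union> (set (map fst ps))"
    by (simp add: atLeast0LessThan)
  moreover have "disjoint_family_on (\<lambda>j. fst (ps ! j)) {..<length ps} \<longleftrightarrow>
      disjoint_family_on (nth (map fst ps)) {..<length ps}"
    by (simp add: disjoint_family_on_def)
  ultimately show ?thesis
    unfolding prod_sp_def is_decomposition_def list_all2_conv_all_nth
    by (cases "length ps = length Fs") simp_all
qed

lemma struct_prod_sp:
  "struct (prod_sp Fs) U = {ps. length ps = length Fs \<and> is_decomposition U (map fst ps) \<and>
     (\<forall>j<length Fs. snd (ps ! j) \<in> struct (Fs ! j) (fst (ps ! j)))}"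
  by (auto simp: in_struct_prod_sp list_all2_conv_all_nth)

lemma transp_prod_sp:
  "transp (prod_sp Fs) \<tau> ps = map (\<lambda>j. (\<tau> ` fst (ps ! j), transp (Fs ! j) \<tau> (snd (ps ! j)))) [0..<length ps]"
  by (simp add: prod_sp_def)

lemma is_decomposition_nth_subset: "is_decomposition U Bs \<Longrightarrow> j < length Bs \<Longrightarrow> Bs ! j \<subseteq> U"
  unfolding is_decomposition_def by auto

lemma disjoint_family_on_reindex:
  assumes "bij_betw h I J"
  shows "disjoint_family_on (A \<circ> h) I \<longleftrightarrow> disjoint_family_on A J"
  using assms unfolding disjoint_family_on_def bij_betw_def inj_on_def
  by (smt (verit, best) comp_apply image_iff)

lemma is_decomposition_rev: "is_decomposition U (rev Bs) \<longleftrightarrow> is_decomposition U Bs"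
proof -
  let ?n = "length Bs"
  have "bij_betw (\<lambda>j. ?n - Suc j) {..<?n} {..<?n}"
    by (rule bij_betw_byWitness[where f' = "\<lambda>j. ?n - Suc j"]) auto
  then have "disjoint_family_on (nth Bs \<circ> (\<lambda>j. ?n - Suc j)) {..<?n} \<longleftrightarrow>
      disjoint_family_on (nth Bs) {..<?n}"
    by (rule disjoint_family_on_reindex)
  moreover have "disjoint_family_on (nth (rev Bs)) {..<?n} \<longleftrightarrow>
      disjoint_family_on (nth Bs \<circ> (\<lambda>j. ?n - Suc j)) {..<?n}"
    unfolding disjoint_family_on_def by (simp add: rev_nth)
  ultimately show ?thesis
    by (simp add: is_decomposition_def)
qed

lemma in_struct_prod_sp_rev: "ps \<in> struct (prod_sp (rev Fs)) U \<longleftrightarrow> rev ps \<in> struct (prod_sp Fs) U"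
  by (simp add: in_struct_prod_sp list_all2_rev1 rev_map[symmetric] is_decomposition_rev)

lemma species_iso_prod_sp_rev: "species_iso (prod_sp (rev Fs)) (prod_sp Fs)"
  unfolding species_iso_iff_natural_iso
proof (intro exI natural_isoI)
  fix U :: "'a set"
  show "bij_betw rev (struct (prod_sp (rev Fs)) U) (struct (prod_sp Fs) U)"
    by (rule bij_betw_byWitness[where f' = rev]) (auto simp: in_struct_prod_sp_rev)
next
  fix U V \<tau> ps assume "ps \<in> struct (prod_sp (rev Fs)) U"
  then have "length ps = length Fs"
    by (auto simp: in_struct_prod_sp dest: list_all2_lengthD)
  then show "rev (transp (prod_sp (rev Fs)) \<tau> ps) = transp (prod_sp Fs) \<tau> (rev ps)"
    by (intro nth_equalityI) (auto simp: transp_prod_sp rev_nth)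
qed

lemma bij_betw_map_snd_nth:
  fixes f :: "nat \<Rightarrow> 'x \<Rightarrow> 'a \<Rightarrow> 'b" and A :: "nat \<Rightarrow> 'x \<Rightarrow> 'a set" and B :: "nat \<Rightarrow> 'x \<Rightarrow> 'b set"
  assumes bij: "\<And>Bs j. P Bs \<Longrightarrow> length Bs = n \<Longrightarrow> j < n \<Longrightarrow>
      bij_betw (f j (Bs ! j)) (A j (Bs ! j)) (B j (Bs ! j))"
  shows "bij_betw (\<lambda>ps. map (\<lambda>j. (fst (ps ! j), f j (fst (ps ! j)) (snd (ps ! j)))) [0..<length ps])
     {ps. length ps = n \<and> P (map fst ps) \<and> (\<forall>j<n. snd (ps ! j) \<in> A j (fst (ps ! j)))}
     {ps. length ps = n \<and> P (map fst ps) \<and> (\<forall>j<n. snd (ps ! j) \<in> B j (fst (ps ! j)))}"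
    (is "bij_betw ?\<phi> ?A ?B")
proof -
  let ?\<psi> = "\<lambda>ps. map (\<lambda>j. (fst (ps ! j), inv_into (A j (fst (ps ! j))) (f j (fst (ps ! j))) (snd (ps ! j))))
     [0..<length ps]"
  have [simp]: "map fst (?\<phi> ps) = map fst ps" "map fst (?\<psi> qs) = map fst qs" for ps qs
    by (auto intro: nth_equalityI)
  have bijA: "bij_betw (f j (fst (ps ! j))) (A j (fst (ps ! j))) (B j (fst (ps ! j)))"
    if "ps \<in> ?A" "j < n" for ps j
    using bij[of "map fst ps" j] that by auto
  have bijB: "bij_betw (f j (fst (qs ! j))) (A j (fst (qs ! j))) (B j (fst (qs ! j)))"
    if "qs \<in> ?B" "j < n" for qs j
    using bij[of "map fst qs" j] that by auto
  show ?thesis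
  proof (rule bij_betw_byWitness[where f' = ?\<psi>])
    show "\<forall>ps\<in>?A. ?\<psi> (?\<phi> ps) = ps"
    proof (intro ballI nth_equalityI)
      fix ps j assume ps: "ps \<in> ?A" and "j < length (?\<psi> (?\<phi> ps))"
      then have j: "j < n" by simp
      show "?\<psi> (?\<phi> ps) ! j = ps ! j"
        using bij_betw_inv_into_left[OF bijA[OF ps j]] ps j by simp
    qed simp
    show "\<forall>qs\<in>?B. ?\<phi> (?\<psi> qs) = qs"
    proof (intro ballI nth_equalityI)
      fix qs j assume qs: "qs \<in> ?B" and "j < length (?\<phi> (?\<psi> qs))"
      then have j: "j < n" by simp
      show "?\<phi> (?\<psi> qs) ! j = qs ! j"
        using bij_betw_inv_into_right[OF bijB[OF qs j]] qs j by simp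
    qed simp
    show "?\<phi> ` ?A \<subseteq> ?B"
      using bij_betw_apply[OF bijA] by (auto simp del: map_map)
    show "?\<psi> ` ?B \<subseteq> ?A"
      using bij_betw_apply[OF bij_betw_inv_into[OF bijB]] by (auto simp del: map_map)
  qed
qed

lemma species_iso_prod_sp:
  assumes "list_all2 species_iso Fs Gs"
  shows "species_iso (prod_sp Fs) (prod_sp Gs)"
proof -
  have len: "length Gs = length Fs"
    using assms by (simp add: list_all2_lengthD)
  have "\<forall>j. \<exists>\<phi>. j < length Fs \<longrightarrow> natural_iso \<phi> (Fs ! j) (Gs ! j)"
    using assms by (auto simp: list_all2_conv_all_nth species_iso_iff_natural_iso)
  then obtain \<Phi> where iso: "\<And>j. j < length Fs \<Longrightarrow> natural_iso (\<Phi> j) (Fs ! j) (Gs ! j)"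
    by metis
  define \<phi> where "\<phi> ps = map (\<lambda>j. (fst (ps ! j), \<Phi> j (fst (ps ! j)) (snd (ps ! j)))) [0..<length ps]"
    for ps
  have "natural_iso (\<lambda>U. \<phi>) (prod_sp Fs) (prod_sp Gs)"
  proof (rule natural_isoI)
    fix U :: "'a set" assume U: "finite U"
    show "bij_betw \<phi> (struct (prod_sp Fs) U) (struct (prod_sp Gs) U)"
      unfolding \<phi>_def struct_prod_sp len
      by (rule bij_betw_map_snd_nth) (metis iso natural_iso_bij_betw is_decomposition_nth_subset U finite_subset)
  next
    fix U V :: "'a set" and \<tau> ps
    assume U: "finite U" and \<tau>: "bij_betw \<tau> U V" and ps: "ps \<in> struct (prod_sp Fs) U"
    then have l: "length ps = length Fs" and dec: "is_decomposition U (map fst ps)"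
      and s: "\<And>j. j < length Fs \<Longrightarrow> snd (ps ! j) \<in> struct (Fs ! j) (fst (ps ! j))"
      by (auto simp: struct_prod_sp)
    have "\<Phi> j (\<tau> ` fst (ps ! j)) (transp (Fs ! j) \<tau> (snd (ps ! j))) =
        transp (Gs ! j) \<tau> (\<Phi> j (fst (ps ! j)) (snd (ps ! j)))" if j: "j < length Fs" for j
    proof (rule natural_iso_transp[OF iso[OF j] _ _ s[OF j]])
      have "fst (ps ! j) \<subseteq> U"
        using is_decomposition_nth_subset[OF dec] j l by simp
      then show "finite (fst (ps ! j))" "bij_betw \<tau> (fst (ps ! j)) (\<tau> ` fst (ps ! j))"
        using U \<tau> by (auto intro: finite_subset bij_betw_subset)
    qed
    then show "\<phi> (transp (prod_sp Fs) \<tau> ps) = transp (prod_sp Gs) \<tau> (\<phi> ps)"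
      using l by (intro nth_equalityI) (auto simp: \<phi>_def transp_prod_sp len)
  qed
  then show ?thesis
    unfolding species_iso_iff_natural_iso by blast
qed

section \<open>Quotient species\<close>

lemma coset_list_eq_image: "coset_list n H xs = (\<lambda>f. map (\<lambda>t. xs ! f t) [0..<n]) ` H"
  by (auto simp: coset_list_def)

lemma coset_list_cyc_group:
  "coset_list n (cyc_group \<sigma>) xs = range (\<lambda>k. map (\<lambda>t. xs ! (\<sigma> ^^ k) t) [0..<n])"
  by (auto simp: coset_list_def cyc_group_def)

lemma coset_list_map:
  assumes "\<forall>f\<in>H. \<forall>t<n. f t < n" "length xs = n"
  shows "map \<tau> ` coset_list n H xs = coset_list n H (map \<tau> xs)"
  unfolding coset_list_eq_image image_image using assms by (intro image_cong) auto

definition coset_lift :: "nat \<Rightarrow> (nat \<Rightarrow> nat) set \<Rightarrow> ('a list \<Rightarrow> 't) \<Rightarrow> 'a list set \<Rightarrow> 't" where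
  "coset_lift n H \<psi> S = \<psi> (SOME xs. distinct xs \<and> length xs = n \<and> S = coset_list n H xs)"

lemma coset_lift_coset_list:
  assumes eq_iff: "\<And>xs ys. distinct xs \<Longrightarrow> length xs = n \<Longrightarrow> distinct ys \<Longrightarrow> length ys = n \<Longrightarrow>
      \<psi> xs = \<psi> ys \<longleftrightarrow> coset_list n H xs = coset_list n H ys"
    and xs: "distinct xs" "length xs = n"
  shows "coset_lift n H \<psi> (coset_list n H xs) = \<psi> xs"
proof -
  let ?P = "\<lambda>ys. distinct ys \<and> length ys = n \<and> coset_list n H xs = coset_list n H ys"
  have "?P (SOME ys. ?P ys)"
    using xs by (intro someI[of ?P xs]) simp
  then show ?thesis
    using eq_iff[of "SOME ys. ?P ys" xs] xs by (simp add: coset_lift_def)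
qed

lemma bij_betw_coset_lift:
  assumes into: "\<And>xs. distinct xs \<Longrightarrow> length xs = n \<Longrightarrow> \<psi> xs \<in> struct G (set xs)"
    and eq_iff: "\<And>xs ys. distinct xs \<Longrightarrow> length xs = n \<Longrightarrow> distinct ys \<Longrightarrow> length ys = n \<Longrightarrow>
      \<psi> xs = \<psi> ys \<longleftrightarrow> coset_list n H xs = coset_list n H ys"
    and onto: "\<And>s. s \<in> struct G U \<Longrightarrow> \<exists>xs. distinct xs \<and> length xs = n \<and> set xs = U \<and> \<psi> xs = s"
  shows "bij_betw (coset_lift n H \<psi>)
    (coset_list n H ` {xs. distinct xs \<and> length xs = n \<and> set xs = U}) (struct G U)"
proof -
  define lists where "lists = {xs. distinct xs \<and> length xs = n \<and> set xs = U}"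
  have lift: "coset_lift n H \<psi> (coset_list n H xs) = \<psi> xs" if "distinct xs" "length xs = n" for xs
    using coset_lift_coset_list[OF eq_iff that] .
  have "inj_on (coset_lift n H \<psi>) (coset_list n H ` lists)"
  proof (rule inj_onI)
    fix S S' assume "S \<in> coset_list n H ` lists" "S' \<in> coset_list n H ` lists"
      and eq: "coset_lift n H \<psi> S = coset_lift n H \<psi> S'"
    then obtain xs ys where "xs \<in> lists" "S = coset_list n H xs" "ys \<in> lists" "S' = coset_list n H ys"
      by blast
    then show "S = S'"
      using eq eq_iff[of xs ys] by (simp add: lift lists_def)
  qed
  moreover have "coset_lift n H \<psi> ` coset_list n H ` lists = \<psi> ` lists"
    unfolding image_image by (rule image_cong) (simp_all add: lift lists_def)
  moreover have "\<psi> ` lists = struct G U"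
  proof
    show "\<psi> ` lists \<subseteq> struct G U"
      using into by (auto simp: lists_def)
    show "struct G U \<subseteq> \<psi> ` lists"
    proof
      fix s assume "s \<in> struct G U"
      then obtain xs where "xs \<in> lists" "s = \<psi> xs"
        using onto unfolding lists_def by blast
      then show "s \<in> \<psi> ` lists"
        by blast
    qed
  qed
  ultimately show ?thesis
    by (simp add: bij_betw_def lists_def)
qed

lemma species_iso_quot_spI:
  fixes \<psi> :: "'a list \<Rightarrow> 't" and G :: "('a, 't) species"
  assumes closed: "\<forall>f\<in>H. \<forall>t<n. f t < n"
    and into: "\<And>xs. distinct xs \<Longrightarrow> length xs = n \<Longrightarrow> \<psi> xs \<in> struct G (set xs)"
    and eq_iff: "\<And>xs ys. distinct xs \<Longrightarrow> length xs = n \<Longrightarrow> distinct ys \<Longrightarrow> length ys = n \<Longrightarrow>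
      \<psi> xs = \<psi> ys \<longleftrightarrow> coset_list n H xs = coset_list n H ys"
    and onto: "\<And>U s. finite U \<Longrightarrow> s \<in> struct G U \<Longrightarrow>
      \<exists>xs. distinct xs \<and> length xs = n \<and> set xs = U \<and> \<psi> xs = s"
    and natural: "\<And>xs \<tau>. distinct xs \<Longrightarrow> length xs = n \<Longrightarrow> inj_on \<tau> (set xs) \<Longrightarrow>
      \<psi> (map \<tau> xs) = transp G \<tau> (\<psi> xs)"
  shows "species_iso (quot_sp n H) G"
proof -
  have S: "struct (quot_sp n H) U = coset_list n H ` {xs. distinct xs \<and> length xs = n \<and> set xs = U}" for U
    by (auto simp: quot_sp_def)
  have "natural_iso (\<lambda>U. coset_lift n H \<psi>) (quot_sp n H) G"
  proof (rule natural_isoI)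
    fix U :: "'a set" assume U: "finite U"
    show "bij_betw (coset_lift n H \<psi>) (struct (quot_sp n H) U) (struct G U)"
      unfolding S by (rule bij_betw_coset_lift[OF into eq_iff onto[OF U]])
  next
    fix U V :: "'a set" and \<tau> s
    assume "finite U" and \<tau>: "bij_betw \<tau> U V" and "s \<in> struct (quot_sp n H) U"
    then obtain xs where xs: "distinct xs" "length xs = n" "set xs = U" and s: "s = coset_list n H xs"
      by (auto simp: S)
    have inj: "inj_on \<tau> (set xs)"
      using \<tau> xs(3) by (simp add: bij_betw_def)
    have "transp (quot_sp n H) \<tau> s = coset_list n H (map \<tau> xs)"
      using closed xs(2) by (simp add: s quot_sp_def coset_list_map)
    then show "coset_lift n H \<psi> (transp (quot_sp n H) \<tau> s) = transp G \<tau> (coset_lift n H \<psi> s)"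
      using xs inj by (simp add: s coset_lift_coset_list[OF eq_iff] distinct_map natural)
  qed
  then show ?thesis
    unfolding species_iso_iff_natural_iso by blast
qed

section \<open>The standard permutation of shape \<open>(i\<^sup>a)\<close>\<close>

text \<open>Rotation by \<open>k\<close> of position \<open>t\<close> within its row, for lists read as matrices with rows of length \<open>i\<close>.\<close>

definition block_rotate :: "nat \<Rightarrow> nat \<Rightarrow> nat \<Rightarrow> nat" where
  "block_rotate i k t = t div i * i + (t mod i + k) mod i"

lemma block_rotate_lt:
  assumes "0 < i" "t < a * i"
  shows "block_rotate i k t < a * i"
proof -
  have "t div i < a"
    using assms by (simp add: div_less_iff_less_mult mult.commute)
  then have "t div i * i + i \<le> a * i"
    by (metis add.commute less_eq_Suc_le mult_Suc mult_le_mono1)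
  moreover have "(t mod i + k) mod i < i"
    using assms(1) by simp
  ultimately show ?thesis
    unfolding block_rotate_def by linarith
qed

lemma block_rotate_add: "0 < i \<Longrightarrow> block_rotate i k (block_rotate i m t) = block_rotate i (m + k) t"
  unfolding block_rotate_def by (simp add: mod_add_left_eq add.assoc)

lemma std_perm_replicate:
  "0 < i \<Longrightarrow> t < a * i \<Longrightarrow> std_perm (replicate a i) t = block_rotate i 1 t"
proof (induction a arbitrary: t)
  case (Suc a)
  show ?case
  proof (cases "t < i")
    case True
    then show ?thesis
      by (auto simp: block_rotate_def mod_Suc)
  next
    case False
    then obtain u where u: "t = i + u"
      using le_Suc_ex not_less by blast
    then have "std_perm (replicate a i) u = block_rotate i 1 u"
      using Suc by simp
    then show ?thesis
      using u Suc.prems(1) by (simp add: block_rotate_def div_add_self1 algebra_simps)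
  qed
qed simp

lemma funpow_std_perm_replicate:
  "0 < i \<Longrightarrow> t < a * i \<Longrightarrow> (std_perm (replicate a i) ^^ k) t = block_rotate i k t"
proof (induction k)
  case 0
  then show ?case
    by (simp add: block_rotate_def)
next
  case (Suc k)
  then show ?case
    using block_rotate_lt std_perm_replicate block_rotate_add by simp
qed

definition columns :: "nat \<Rightarrow> nat \<Rightarrow> 'a list \<Rightarrow> 'a list list" where
  "columns i a xs = map (\<lambda>t. map (\<lambda>j. xs ! (j * i + t)) [0..<a]) [0..<i]"

definition interleave :: "nat \<Rightarrow> nat \<Rightarrow> 'a list list \<Rightarrow> 'a list" where
  "interleave i a L = map (\<lambda>p. L ! (p mod i) ! (p div i)) [0..<a * i]"

lemma row_major_index_lt: "j < a \<Longrightarrow> t < i \<Longrightarrow> j * i + t < a * (i :: nat)"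
  by (metis add.commute add_less_mono1 less_eq_Suc_le mult_Suc mult_le_mono1 order_less_le_trans)

lemma row_major_index_split: "0 < i \<Longrightarrow> p < a * i \<Longrightarrow> p div i < a \<and> p mod i < (i :: nat)"
  by (simp add: div_less_iff_less_mult mult.commute)

lemma length_columns [simp]: "length (columns i a xs) = i"
  by (simp add: columns_def)

lemma nth_columns: "t < i \<Longrightarrow> columns i a xs ! t = map (\<lambda>j. xs ! (j * i + t)) [0..<a]"
  by (simp add: columns_def)

lemma length_in_columns: "l \<in> set (columns i a xs) \<Longrightarrow> length l = a"
  by (auto simp: columns_def)

lemma length_interleave [simp]: "length (interleave i a L) = a * i"
  by (simp add: interleave_def)

lemma columns_interleave:
  assumes "length L = i" "\<forall>l\<in>set L. length l = a"
  shows "columns i a (interleave i a L) = L"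
  using assms by (intro nth_equalityI) (auto simp: nth_columns interleave_def row_major_index_lt)

lemma interleave_columns:
  assumes "length xs = a * i"
  shows "interleave i a (columns i a xs) = xs"
proof (rule nth_equalityI)
  fix p assume "p < length (interleave i a (columns i a xs))"
  then have "p < a * i" "0 < i"
    by (auto intro: gr0I)
  then show "interleave i a (columns i a xs) ! p = xs ! p"
    using row_major_index_split by (simp add: interleave_def nth_columns)
qed (simp add: assms)

lemma columns_map: "length xs = a * i \<Longrightarrow> columns i a (map f xs) = map (map f) (columns i a xs)"
  by (intro nth_equalityI) (auto simp: nth_columns row_major_index_lt)

lemma set_concat_columns:
  assumes "0 < i" "length xs = a * i"
  shows "set (concat (columns i a xs)) = set xs"
proof
  show "set (concat (columns i a xs)) \<subseteq> set xs"
    using assms(2) by (auto simp: columns_def row_major_index_lt)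
  show "set xs \<subseteq> set (concat (columns i a xs))"
  proof
    fix x assume "x \<in> set xs"
    then obtain p where p: "p < a * i" "x = xs ! p"
      using assms(2) by (auto simp: in_set_conv_nth)
    moreover have "p mod i < i" "p div i < a"
      using row_major_index_split[OF assms(1) p(1)] by simp_all
    ultimately have "x \<in> set (columns i a xs ! (p mod i))"
      by (force simp: nth_columns)
    then show "x \<in> set (concat (columns i a xs))"
      using \<open>p mod i < i\<close> by (auto intro: nth_mem)
  qed
qed

lemma distinct_concat_columns:
  assumes "0 < i" "length xs = a * i"
  shows "distinct (concat (columns i a xs)) \<longleftrightarrow> distinct xs"
proof -
  have "length (concat (columns i a xs)) = length xs"
    using assms(2) by (simp add: columns_def length_concat comp_def sum_list_triv)
  then show ?thesis
    using set_concat_columns[OF assms] by (metis card_distinct distinct_card)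
qed

lemma range_rotate_rotate: "range (\<lambda>m. rotate m (rotate k xs)) = range (\<lambda>m. rotate m xs)"
proof -
  have "rotate m xs = rotate (m + (length xs - 1) * k) (rotate k xs)" for m
  proof (cases xs)
    case (Cons x ys)
    have "rotate (m + (length xs - 1) * k) (rotate k xs) = rotate (m + k * length xs) xs"
      using Cons by (simp add: rotate_rotate algebra_simps)
    also have "\<dots> = rotate m xs"
      by (metis rotate_conv_mod mod_mult_self1)
    finally show ?thesis ..
  qed simp
  then show ?thesis
    by (auto simp: rotate_rotate)
qed

lemma coset_std_perm_replicate:
  assumes "0 < i" "length xs = a * i"
  shows "coset_list (a * i) (cyc_group (std_perm (replicate a i))) xs =
    range (\<lambda>k. interleave i a (rotate k (columns i a xs)))"
proof -
  have "map (\<lambda>t. xs ! (std_perm (replicate a i) ^^ k) t) [0..<a * i] =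
      interleave i a (rotate k (columns i a xs))" for k
  proof (rule nth_equalityI)
    fix p assume "p < length (map (\<lambda>t. xs ! (std_perm (replicate a i) ^^ k) t) [0..<a * i])"
    then have p: "p < a * i"
      by simp
    have "(k + p mod i) mod i < i"
      using assms(1) by simp
    then show "map (\<lambda>t. xs ! (std_perm (replicate a i) ^^ k) t) [0..<a * i] ! p =
        interleave i a (rotate k (columns i a xs)) ! p"
      using p funpow_std_perm_replicate[OF assms(1) p] row_major_index_split[OF assms(1) p]
      by (simp add: interleave_def nth_rotate nth_columns block_rotate_def add.commute)
  qed simp
  then show ?thesis
    by (simp add: coset_list_cyc_group)
qed

lemma coset_std_perm_single:
  assumes "0 < i" "length bs = i"
  shows "coset_list i (cyc_group (std_perm [i])) bs = range (\<lambda>k. rotate k bs)"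
proof -
  have "(std_perm [i] ^^ k) t = (k + t) mod i" if "t < i" for k t
    using funpow_std_perm_replicate[of i t 1 k] assms(1) that by (simp add: block_rotate_def add.commute)
  then have "map (\<lambda>t. bs ! (std_perm [i] ^^ k) t) [0..<i] = rotate k bs" for k
    using assms(2) by (intro nth_equalityI) (simp_all add: nth_rotate)
  then show ?thesis
    by (simp add: coset_list_cyc_group)
qed

lemma coset_std_perm_replicate_eq_iff:
  assumes "0 < i" "length xs = a * i" "length ys = a * i"
  shows "coset_list (a * i) (cyc_group (std_perm (replicate a i))) xs =
      coset_list (a * i) (cyc_group (std_perm (replicate a i))) ys \<longleftrightarrow>
    (\<exists>k. columns i a ys = rotate k (columns i a xs))"
proof
  have shape: "length (rotate k (columns i a xs)) = i" "\<forall>l\<in>set (rotate k (columns i a xs)). length l = a" for k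
    by (auto simp: columns_def)
  assume "coset_list (a * i) (cyc_group (std_perm (replicate a i))) xs =
      coset_list (a * i) (cyc_group (std_perm (replicate a i))) ys"
  moreover have "ys \<in> coset_list (a * i) (cyc_group (std_perm (replicate a i))) ys"
    using coset_std_perm_replicate[OF assms(1,3)] interleave_columns[OF assms(3)]
    by (metis rangeI rotate0 id_apply)
  ultimately obtain k where "ys = interleave i a (rotate k (columns i a xs))"
    using coset_std_perm_replicate[OF assms(1,2)] by auto
  then show "\<exists>k. columns i a ys = rotate k (columns i a xs)"
    using columns_interleave[OF shape] by auto
next
  assume "\<exists>k. columns i a ys = rotate k (columns i a xs)"
  then obtain k where "columns i a ys = rotate k (columns i a xs)" ..
  then show "coset_list (a * i) (cyc_group (std_perm (replicate a i))) xs =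
      coset_list (a * i) (cyc_group (std_perm (replicate a i))) ys"
    unfolding coset_std_perm_replicate[OF assms(1,2)] coset_std_perm_replicate[OF assms(1,3)]
    by (simp add: range_composition[of "interleave i a"] range_rotate_rotate)
qed

section \<open>Cycles of lists as \<open>C\<^sub>i(X\<^sup>a)\<close>-structures\<close>

definition list_of_block :: "'a list list \<Rightarrow> 'a set \<Rightarrow> 'a list" where
  "list_of_block L B = (THE l. l \<in> set L \<and> set l = B)"

definition cycle_struct :: "'a list list \<Rightarrow> 'a set set \<times> 'a set list set \<times> ('a set \<Rightarrow> 'a list)" where
  "cycle_struct L = (set ` set L, range (\<lambda>k. rotate k (map set L)), restrict (list_of_block L) (set ` set L))"

lemma list_of_block_set:
  assumes "distinct (concat L)" "l \<in> set L"
  shows "list_of_block L (set l) = l"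
  unfolding list_of_block_def
proof (rule the_equality)
  fix l' assume l': "l' \<in> set L \<and> set l' = set l"
  show "l' = l"
  proof (rule ccontr)
    assume ne: "l' \<noteq> l"
    then have "set l' \<inter> set l = {}"
      using assms l' unfolding distinct_concat_iff by blast
    then have "l' = [] \<and> l = []"
      using l' by auto
    then show False
      using ne by simp
  qed
qed (use assms in simp)

lemma cycle_struct_rotate: "cycle_struct (rotate k L) = cycle_struct L"
proof -
  have "list_of_block (rotate k L) = list_of_block L"
    by (simp add: fun_eq_iff list_of_block_def)
  then show ?thesis
    by (simp add: cycle_struct_def rotate_map[symmetric] range_rotate_rotate)
qed

lemma cycle_struct_eq_iff:
  assumes "distinct (concat L)" "distinct (concat M)"
  shows "cycle_struct M = cycle_struct L \<longleftrightarrow> (\<exists>k. M = rotate k L)"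
proof
  assume eq: "cycle_struct M = cycle_struct L"
  have "map set M \<in> range (\<lambda>k. rotate k (map set M))"
    by (metis rangeI rotate0 id_apply)
  then obtain k where k: "map set M = map set (rotate k L)"
    using eq by (auto simp: cycle_struct_def rotate_map)
  have "M = map (list_of_block M) (map set M)"
    using list_of_block_set[OF assms(2)] by (simp add: map_idI)
  also have "\<dots> = map (list_of_block L) (map set M)"
  proof -
    have "restrict (list_of_block M) (set ` set M) = restrict (list_of_block L) (set ` set M)"
      using eq unfolding cycle_struct_def by (metis prod.inject)
    then show ?thesis
      by (metis (no_types, lifting) image_eqI list.set_map map_eq_conv restrict_apply')
  qed
  also have "\<dots> = rotate k L"
    unfolding k map_map by (rule map_idI) (simp add: list_of_block_set[OF assms(1)])
  finally show "\<exists>k. M = rotate k L" ..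
qed (auto simp: cycle_struct_rotate)

lemma in_struct_comp_sp:
  "(\<pi>, f, g) \<in> struct (comp_sp F G) U \<longleftrightarrow>
     partition_on U \<pi> \<and> f \<in> struct F \<pi> \<and> g \<in> (\<Pi>\<^sub>E B\<in>\<pi>. struct G B)"
  by (simp add: comp_sp_def)

lemma transp_comp_sp:
  "transp (comp_sp F G) \<tau> (\<pi>, f, g) = ((`) \<tau> ` \<pi>, transp F ((`) \<tau>) f,
      \<lambda>B'\<in>(`) \<tau> ` \<pi>. transp G \<tau> (g (the_inv_into \<pi> ((`) \<tau>) B')))"
  by (simp add: comp_sp_def)

lemma struct_C_sp_single:
  assumes "0 < i"
  shows "struct (C_sp [i]) P = {range (\<lambda>k. rotate k bs) | bs. distinct bs \<and> length bs = i \<and> set bs = P}"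
proof -
  have "struct (C_sp [i]) P = {coset_list i (cyc_group (std_perm [i])) bs | bs. distinct bs \<and> length bs = i \<and> set bs = P}"
    by (simp add: C_sp_def quot_sp_def)
  also have "\<dots> = {range (\<lambda>k. rotate k bs) | bs. distinct bs \<and> length bs = i \<and> set bs = P}"
    using coset_std_perm_single[OF assms] by (intro Collect_cong ex_cong1) auto
  finally show ?thesis .
qed

lemma transp_C_sp: "transp (C_sp \<beta>) h f = map h ` f"
  by (simp add: C_sp_def quot_sp_def)

lemma struct_Xpow: "struct (Xpow a) B = {xs. distinct xs \<and> length xs = a \<and> set xs = B}"
  by (simp add: Xpow_def)

lemma transp_Xpow: "transp (Xpow a) h xs = map h xs"
  by (simp add: Xpow_def)

lemma distinct_map_set:
  assumes "distinct (concat L)" "[] \<notin> set L"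
  shows "distinct (map set L)"
proof -
  have "distinct L"
    using assms by (simp add: distinct_concat_iff removeAll_id)
  moreover have "inj_on set (set L)"
  proof (rule inj_onI)
    fix l l' assume "l \<in> set L" "l' \<in> set L" "set l = set l'"
    then show "l = l'"
      using assms by (metis list_of_block_set)
  qed
  ultimately show ?thesis
    by (simp add: distinct_map)
qed

lemma cycle_struct_in_struct:
  assumes "0 < length L" "\<forall>l\<in>set L. length l = a" "[] \<notin> set L" "distinct (concat L)"
  shows "cycle_struct L \<in> struct (comp_sp (C_sp [length L]) (Xpow a)) (set (concat L))"
proof -
  have "partition_on (set (concat L)) (set ` set L)"
  proof (rule partition_onI)
    fix B B' assume "B \<in> set ` set L" "B' \<in> set ` set L" "B \<noteq> B'"
    then show "disjnt B B'"
      using assms(4) unfolding distinct_concat_iff disjnt_def by blast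
  qed (use assms(3) in auto)
  moreover have "range (\<lambda>k. rotate k (map set L)) \<in> struct (C_sp [length L]) (set ` set L)"
    using assms(1) distinct_map_set[OF assms(4,3)] by (auto simp: struct_C_sp_single)
  moreover have "restrict (list_of_block L) (set ` set L) \<in> (\<Pi>\<^sub>E B\<in>set ` set L. struct (Xpow a) B)"
    using assms(2,4) list_of_block_set[OF assms(4)]
    by (auto simp: struct_Xpow distinct_concat_iff)
  ultimately show ?thesis
    by (simp add: cycle_struct_def in_struct_comp_sp)
qed

lemma distinct_concat_map_blocks:
  assumes \<pi>: "partition_on U \<pi>" and bs: "distinct bs" "set bs = \<pi>"
    and g: "\<And>B. B \<in> \<pi> \<Longrightarrow> distinct (g B) \<and> set (g B) = B"
  shows "distinct (concat (map g bs))"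
  unfolding distinct_concat_iff
proof (intro conjI allI impI)
  have "map set (map g bs) = bs"
    using g bs(2) by (auto intro: map_idI)
  moreover have "[] \<notin> set (map g bs)"
    using g partition_onD3[OF \<pi>] bs(2) by force
  ultimately show "distinct (removeAll [] (map g bs))"
    using bs(1) by (metis removeAll_id distinct_map)
next
  fix l l' assume "l \<in> set (map g bs) \<and> l' \<in> set (map g bs) \<and> l \<noteq> l'"
  then show "set l \<inter> set l' = {}"
    using g bs(2) partition_onD2[OF \<pi>] by (force simp: disjoint_def)
qed (use g bs(2) in auto)

lemma cycle_struct_surj:
  assumes "0 < i" and s: "s \<in> struct (comp_sp (C_sp [i]) (Xpow a)) U"
  shows "\<exists>L. length L = i \<and> (\<forall>l\<in>set L. length l = a) \<and> distinct (concat L) \<and>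
    set (concat L) = U \<and> cycle_struct L = s"
proof -
  obtain \<pi> f g where s_eq: "s = (\<pi>, f, g)" and \<pi>: "partition_on U \<pi>"
    and f: "f \<in> struct (C_sp [i]) \<pi>" and g: "g \<in> (\<Pi>\<^sub>E B\<in>\<pi>. struct (Xpow a) B)"
    using s by (cases s) (auto simp: in_struct_comp_sp)
  obtain bs where bs: "distinct bs" "length bs = i" "set bs = \<pi>" and f_eq: "f = range (\<lambda>k. rotate k bs)"
    using f assms(1) by (auto simp: struct_C_sp_single)
  have gB: "distinct (g B) \<and> length (g B) = a \<and> set (g B) = B" if "B \<in> \<pi>" for B
    using g that by (auto simp: struct_Xpow)
  define L where "L = map g bs"
  have sets: "map set L = bs"
    using gB bs(3) by (auto simp: L_def intro: map_idI)
  then have blocks: "set ` set L = \<pi>"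
    using bs(3) by (metis list.set_map)
  have "distinct (concat L)"
    unfolding L_def using \<pi> bs(1,3) by (rule distinct_concat_map_blocks) (simp add: gB)
  moreover have "set (concat L) = U"
    using partition_onD1[OF \<pi>] gB bs(3) by (auto simp: L_def)
  moreover have "cycle_struct L = s"
    unfolding cycle_struct_def s_eq f_eq blocks sets
  proof (simp, rule ext)
    fix B show "restrict (list_of_block L) \<pi> B = g B"
    proof (cases "B \<in> \<pi>")
      case True
      then have mem: "g B \<in> set L"
        using bs(3) by (simp add: L_def)
      show ?thesis
        using list_of_block_set[OF \<open>distinct (concat L)\<close> mem] gB[OF True] True by simp
    next
      case False
      then show ?thesis
        using PiE_arb[OF g False] by simp
    qed
  qed
  moreover have "length L = i" "\<forall>l\<in>set L. length l = a"
    using bs(2,3) gB by (auto simp: L_def)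
  ultimately show ?thesis
    by blast
qed

lemma cycle_struct_map:
  assumes inj: "inj_on \<tau> (set (concat L))" and dist: "distinct (concat L)"
  shows "cycle_struct (map (map \<tau>) L) = transp (comp_sp (C_sp \<beta>) (Xpow a)) \<tau> (cycle_struct L)"
proof -
  have dist': "distinct (concat (map (map \<tau>) L))"
    using inj dist by (simp add: map_concat[symmetric] distinct_map)
  have inj_blocks: "inj_on ((`) \<tau>) (set ` set L)"
    using inj by (intro inj_on_image) simp
  have blocks: "set ` set (map (map \<tau>) L) = (`) \<tau> ` set ` set L"
    by (auto simp: image_image)
  have cycle: "range (\<lambda>k. rotate k (map set (map (map \<tau>) L))) =
      map ((`) \<tau>) ` range (\<lambda>k. rotate k (map set L))"
    by (simp add: rotate_map image_image comp_def)
  have lists: "list_of_block (map (map \<tau>) L) B' =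
      map \<tau> (list_of_block L (the_inv_into (set ` set L) ((`) \<tau>) B'))"
    if mem: "B' \<in> (`) \<tau> ` set ` set L" for B'
  proof -
    obtain l where l: "l \<in> set L" "B' = \<tau> ` set l"
      using mem by auto
    have "the_inv_into (set ` set L) ((`) \<tau>) B' = set l"
      using l by (simp add: the_inv_into_f_f[OF inj_blocks])
    then show ?thesis
      using l list_of_block_set[OF dist l(1)] list_of_block_set[OF dist', of "map \<tau> l"] by simp
  qed
  show ?thesis
    unfolding cycle_struct_def transp_comp_sp transp_C_sp transp_Xpow blocks cycle
    using lists the_inv_into_into[OF inj_blocks] by (auto intro!: restrict_ext)
qed

lemma cycle_struct_columns_in_struct:
  assumes i: "0 < i" and a: "0 < a" and xs: "distinct xs" "length xs = a * i"
  shows "cycle_struct (columns i a xs) \<in> struct (comp_sp (C_sp [i]) (Xpow a)) (set xs)"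
proof -
  have "cycle_struct (columns i a xs) \<in>
      struct (comp_sp (C_sp [length (columns i a xs)]) (Xpow a)) (set (concat (columns i a xs)))"
  proof (rule cycle_struct_in_struct)
    show "[] \<notin> set (columns i a xs)"
      using a length_in_columns by force
  qed (use i xs in \<open>simp_all add: length_in_columns distinct_concat_columns\<close>)
  then show ?thesis
    by (simp only: length_columns set_concat_columns[OF i xs(2)])
qed

lemma cycle_struct_columns_surj:
  assumes i: "0 < i" and s: "s \<in> struct (comp_sp (C_sp [i]) (Xpow a)) U"
  shows "\<exists>xs. distinct xs \<and> length xs = a * i \<and> set xs = U \<and> cycle_struct (columns i a xs) = s"
proof -
  obtain L where L: "length L = i" "\<forall>l\<in>set L. length l = a" "distinct (concat L)"
    "set (concat L) = U" "cycle_struct L = s"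
    using cycle_struct_surj[OF i s] by blast
  then have "columns i a (interleave i a L) = L"
    by (simp add: columns_interleave)
  then show ?thesis
    using L i distinct_concat_columns[of i "interleave i a L" a] set_concat_columns[of i "interleave i a L" a]
    by (intro exI[of _ "interleave i a L"]) simp
qed

section \<open>The species \<open>C\<^bsub>(i\<^sup>a)\<^esub>\<close>\<close>

lemma C_sp_replicate: "C_sp (replicate a i) = quot_sp (a * i) (cyc_group (std_perm (replicate a i)))"
  by (simp add: C_sp_def sum_list_replicate)

lemma species_iso_C_sp_replicate:
  assumes i: "0 < i" and a: "0 < a"
  shows "species_iso (C_sp (replicate a i) :: ('a, 'a list set) species) (comp_sp (C_sp [i]) (Xpow a))"
  unfolding C_sp_replicate
proof (rule species_iso_quot_spI[where \<psi> = "\<lambda>xs. cycle_struct (columns i a xs)"])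
  show "\<forall>f\<in>cyc_group (std_perm (replicate a i)). \<forall>t<a * i. f t < a * i"
    using i by (auto simp: cyc_group_def funpow_std_perm_replicate block_rotate_lt)
next
  fix xs :: "'a list" assume "distinct xs" "length xs = a * i"
  then show "cycle_struct (columns i a xs) \<in> struct (comp_sp (C_sp [i]) (Xpow a)) (set xs)"
    by (rule cycle_struct_columns_in_struct[OF i a])
next
  fix xs ys :: "'a list"
  assume "distinct xs" "length xs = a * i" "distinct ys" "length ys = a * i"
  then have "cycle_struct (columns i a xs) = cycle_struct (columns i a ys) \<longleftrightarrow>
      (\<exists>k. columns i a xs = rotate k (columns i a ys))"
    using i by (intro cycle_struct_eq_iff) (simp_all add: distinct_concat_columns)
  also have "\<dots> \<longleftrightarrow> coset_list (a * i) (cyc_group (std_perm (replicate a i))) ys =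
      coset_list (a * i) (cyc_group (std_perm (replicate a i))) xs"
    by (rule coset_std_perm_replicate_eq_iff[OF i \<open>length ys = a * i\<close> \<open>length xs = a * i\<close>, symmetric])
  finally show "cycle_struct (columns i a xs) = cycle_struct (columns i a ys) \<longleftrightarrow>
      coset_list (a * i) (cyc_group (std_perm (replicate a i))) xs =
      coset_list (a * i) (cyc_group (std_perm (replicate a i))) ys"
    by auto
next
  fix U :: "'a set" and s assume "s \<in> struct (comp_sp (C_sp [i]) (Xpow a)) U"
  then show "\<exists>xs. distinct xs \<and> length xs = a * i \<and> set xs = U \<and> cycle_struct (columns i a xs) = s"
    by (rule cycle_struct_columns_surj[OF i])
next
  fix xs :: "'a list" and \<tau> :: "'a \<Rightarrow> 'a"
  assume xs: "distinct xs" "length xs = a * i" and inj: "inj_on \<tau> (set xs)"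
  have "inj_on \<tau> (set (concat (columns i a xs)))"
    unfolding set_concat_columns[OF i xs(2)] by (rule inj)
  moreover have "distinct (concat (columns i a xs))"
    unfolding distinct_concat_columns[OF i xs(2)] by (rule xs(1))
  ultimately show "cycle_struct (columns i a (map \<tau> xs)) =
      transp (comp_sp (C_sp [i]) (Xpow a)) \<tau> (cycle_struct (columns i a xs))"
    unfolding columns_map[OF xs(2)] by (rule cycle_struct_map)
qed

theorem mainTheorem3:
  fixes ps :: "(nat \<times> nat) list"
  assumes "distinct (map fst ps)"
      and "\<forall>(i, a) \<in> set ps. 0 < i \<and> 0 < a"
  shows "species_iso (K_sp ps :: ('a, _) species)
           (prod_sp (map (\<lambda>(i, a). comp_sp (C_sp [i]) (Xpow a)) ps))"
proof -
  have "species_iso (C_sp (replicate a i) :: ('a, _) species) (comp_sp (C_sp [i]) (Xpow a))"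
    if "(i, a) \<in> set ps" for i a
    using assms(2) that by (auto intro: species_iso_C_sp_replicate)
  then have "list_all2 species_iso (map (\<lambda>(i, a). C_sp (replicate a i) :: ('a, _) species) ps)
      (map (\<lambda>(i, a). comp_sp (C_sp [i]) (Xpow a)) ps)"
    by (auto simp: list_all2_map1 list_all2_map2 list_all2_same)
  then show ?thesis
    unfolding K_sp_def by (rule species_iso_trans[OF species_iso_prod_sp_rev species_iso_prod_sp])
qed

end
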